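(* Let $G=(V,E)$ be an undirected graph, $X\subset V$, $Y=V\setminus X$, $f\in L^\infty(X)$, $g\in L^\infty(Y)$, and let $u:V\to\mathbb{R}$ satisfy $\Delta_\infty u(x)=f(x)$ for all $x\in X$ and $u=g$ on $Y$. Let $x\in X$ and $y\sim x$. Then for every positive integer $N$ with $N\le d(Y,x)$, \[ u(y)-u(x)\ \le\ \frac{u(x)-\inf_V u}{N}+\frac{(N+1)\sup_X f}{2}. \]
   Context: For $x,y\in V$ write $x\sim y$ if $\{x,y\}\in E$; $d(Y,x)$ is the combinatorial distance, i.e. the least length $n$ of a path $Y\ni x_0\sim\cdots\sim x_n=x$. The discrete infinity Laplacian is $\Delta_\infty u(x)=\inf_{z\sim x}u(z)+\sup_{z\sim x}u(z)-2u(x)$. *)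

theory Defs
  imports "HOL-Analysis.Analysis" "HOL-Library.Extended_Nat" "HOL-Library.Extended_Real"
begin

definition ugraph :: "'a set \<Rightarrow> 'a set set \<Rightarrow> bool" where
  "ugraph V E \<longleftrightarrow> (\<forall>e\<in>E. \<exists>a b. a \<noteq> b \<and> a \<in> V \<and> b \<in> V \<and> e = {a, b})"

definition adj :: "'a set set \<Rightarrow> 'a \<Rightarrow> 'a \<Rightarrow> bool" where
  "adj E x y \<longleftrightarrow> {x, y} \<in> E"

definition nbrs :: "'a set \<Rightarrow> 'a set set \<Rightarrow> 'a \<Rightarrow> 'a set" where
  "nbrs V E x = {z \<in> V. adj E x z}"

definition walk :: "'a set set \<Rightarrow> 'a list \<Rightarrow> bool" where
  "walk E xs \<longleftrightarrow> xs \<noteq> [] \<and> (\<forall>i. Suc i < length xs \<longrightarrow> adj E (xs ! i) (xs ! Suc i))"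

text \<open>Combinatorial distance d(Y,x) (infinite if no such path exists).\<close>
definition gdist :: "'a set set \<Rightarrow> 'a set \<Rightarrow> 'a \<Rightarrow> enat" where
  "gdist E Y x = (INF xs \<in> {xs. walk E xs \<and> hd xs \<in> Y \<and> last xs = x}. enat (length xs - 1))"

definition inf_lap :: "'a set \<Rightarrow> 'a set set \<Rightarrow> ('a \<Rightarrow> real) \<Rightarrow> 'a \<Rightarrow> real" where
  "inf_lap V E u x = (INF z \<in> nbrs V E x. u z) + (SUP z \<in> nbrs V E x. u z) - 2 * u x"

text \<open>"Delta_infty u(x) = c" with the inf and sup being (finite) real numbers.\<close>
definition inf_lap_eq :: "'a set \<Rightarrow> 'a set set \<Rightarrow> ('a \<Rightarrow> real) \<Rightarrow> 'a \<Rightarrow> real \<Rightarrow> bool" where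
  "inf_lap_eq V E u x c \<longleftrightarrow> nbrs V E x \<noteq> {} \<and> bdd_below (u ` nbrs V E x) \<and>
      bdd_above (u ` nbrs V E x) \<and> inf_lap V E u x = c"

end

theory Submission
  imports Defs
begin

(* Walk greedily downhill: from the edge y ~ x, repeatedly step from the current vertex z to a
   neighbour where u is within e of its infimum over the neighbours of z. Since
   Delta_infty u(z) = f z <= M = sup f, each drop of u along the walk is at least the previous
   drop minus M + e, so the k-th drop is at least u y - u x - k (M + e). The first N vertices
   after y lie in X because N <= d(Y,x), and the sum of the N drops after x telescopes to at
   most u x - inf u; letting e tend to 0 gives the bound. *)

lemma adj_commute: "adj E a b \<longleftrightarrow> adj E b a"
  unfolding adj_def by (simp add: insert_commute)

lemma inf_lap_eq_exists_descent_nbr: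
  assumes "inf_lap_eq V E u z c" "c \<le> M" "w \<in> V" "adj E z w" "0 < e"
  shows "\<exists>w'\<in>V. adj E z w' \<and> u w - u z - (M + e) \<le> u z - u w'"
proof -
  have ne: "nbrs V E z \<noteq> {}" and bb: "bdd_below (u ` nbrs V E z)"
    and ba: "bdd_above (u ` nbrs V E z)"
    and lap: "(INF t \<in> nbrs V E z. u t) + (SUP t \<in> nbrs V E z. u t) - 2 * u z = c"
    using assms(1) unfolding inf_lap_eq_def inf_lap_def by auto
  have "w \<in> nbrs V E z" using assms(3,4) unfolding nbrs_def by auto
  then have sup: "u w \<le> (SUP t \<in> nbrs V E z. u t)" using ba by (rule cSUP_upper)
  obtain w' where w': "w' \<in> nbrs V E z" "u w' < (INF t \<in> nbrs V E z. u t) + e"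
    using cINF_less_iff[OF ne bb] assms(5) by (metis less_add_same_cancel1)
  show ?thesis
    using w' sup lap assms(2) unfolding nbrs_def by (intro bexI[of _ w']) auto
qed

lemma gdist_le_path:
  assumes "\<forall>i<k. adj E (p i) (p (Suc i))" "p 0 = x" "p k \<in> Y"
  shows "gdist E Y x \<le> enat k"
proof -
  define xs where "xs = map (\<lambda>i. p (k - i)) [0..<Suc k]"
  have "walk E xs" unfolding walk_def
  proof (intro conjI allI impI)
    show "xs \<noteq> []" unfolding xs_def by simp
    fix i assume "Suc i < length xs"
    then have i: "i < k" unfolding xs_def by simp
    then have "adj E (p (k - Suc i)) (p (Suc (k - Suc i)))" using assms(1) by simp
    moreover have "Suc (k - Suc i) = k - i" using i by simp
    moreover have "xs ! i = p (k - i)" "xs ! Suc i = p (k - Suc i)"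
      using i unfolding xs_def by (simp_all del: upt_Suc add: nth_map_upt)
    ultimately show "adj E (xs ! i) (xs ! Suc i)" by (simp add: adj_commute)
  qed
  moreover have "hd xs = p k" unfolding xs_def by (simp del: upt_Suc add: upt_conv_Cons)
  moreover have "last xs = x" unfolding xs_def using assms(2) by (simp add: last_map)
  moreover have "length xs - 1 = k" unfolding xs_def by simp
  ultimately show ?thesis
    unfolding gdist_def using assms(3) by (metis (mono_tags, lifting) INF_lower mem_Collect_eq)
qed

lemma greedy_descent_path:
  assumes "X \<subseteq> V" "Y = V - X" "\<forall>z\<in>X. inf_lap_eq V E u z (f z)" "\<forall>z\<in>X. f z \<le> M"
    and "x \<in> X" "y \<in> V" "adj E x y" "enat N \<le> gdist E Y x" "0 < e"
  shows "k \<le> N \<Longrightarrow> \<exists>q. q 0 = y \<and> q 1 = x \<and> (\<forall>i\<le>Suc k. q i \<in> V)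
           \<and> (\<forall>i\<le>k. adj E (q i) (q (Suc i)))
           \<and> (\<forall>i<k. u (q i) - u (q (Suc i)) - (M + e) \<le> u (q (Suc i)) - u (q (Suc (Suc i))))"
proof (induction k)
  case 0
  show ?case
    using assms(1,5,6,7) by (intro exI[of _ "\<lambda>i. if i = 0 then y else x"]) (auto simp: adj_commute)
next
  case (Suc k)
  then obtain q where q: "q 0 = y" "q 1 = x" "\<forall>i\<le>Suc k. q i \<in> V"
      "\<forall>i\<le>k. adj E (q i) (q (Suc i))"
      "\<forall>i<k. u (q i) - u (q (Suc i)) - (M + e) \<le> u (q (Suc i)) - u (q (Suc (Suc i)))"
    by auto
  have "q (Suc k) \<notin> Y"
  proof
    assume "q (Suc k) \<in> Y"
    then have "gdist E Y x \<le> enat k"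
      using q(2,4) by (intro gdist_le_path[where p = "\<lambda>i. q (Suc i)"]) auto
    then show False using assms(8) Suc.prems by (meson enat_ord_simps(1) not_less_eq_eq order_trans)
  qed
  then have "q (Suc k) \<in> X" using q(3) assms(2) by auto
  moreover have "adj E (q (Suc k)) (q k)" using q(4) by (simp add: adj_commute)
  ultimately obtain w where w: "w \<in> V" "adj E (q (Suc k)) w"
      "u (q k) - u (q (Suc k)) - (M + e) \<le> u (q (Suc k)) - u w"
    using inf_lap_eq_exists_descent_nbr assms(3,4,9) q(3) by (metis le_SucI order_refl)
  show ?case
    using q w by (intro exI[of _ "q(Suc (Suc k) := w)"]) (auto simp: le_Suc_eq less_Suc_eq)
qed

lemma sum_ge_of_decrement_bound:
  fixes D :: "nat \<Rightarrow> real"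
  assumes "\<forall>i<N. D i - c \<le> D (Suc i)"
  shows "real N * D 0 - c * (real N * (real N + 1) / 2) \<le> (\<Sum>i<N. D (Suc i))"
proof -
  have pointwise: "D 0 - real i * c \<le> D i" if "i \<le> N" for i
    using that
  proof (induction i)
    case (Suc i)
    then have "D i - c \<le> D (Suc i)" using assms by simp
    with Suc show ?case by (simp add: algebra_simps)
  qed simp
  have "(\<Sum>i<n. D 0 - real (Suc i) * c) = real n * D 0 - c * (real n * (real n + 1) / 2)" for n
    by (induction n) (simp_all add: field_simps)
  moreover have "(\<Sum>i<N. D 0 - real (Suc i) * c) \<le> (\<Sum>i<N. D (Suc i))"
    by (intro sum_mono pointwise) simp
  ultimately show ?thesis by simp
qed

lemma edge_drop_le:
  assumes "X \<subseteq> V" "Y = V - X" "\<forall>z\<in>X. inf_lap_eq V E u z (f z)" "\<forall>z\<in>X. f z \<le> M"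
    and "x \<in> X" "y \<in> V" "adj E x y" "enat N \<le> gdist E Y x" "0 < N"
    and "\<forall>v\<in>V. m \<le> u v"
  shows "u y - u x \<le> (u x - m) / real N + (real N + 1) * M / 2"
proof (rule field_le_epsilon)
  fix e0 :: real assume "0 < e0"
  define e where "e = 2 * e0 / (real N + 1)"
  have "0 < e" using \<open>0 < e0\<close> unfolding e_def by simp
  then obtain q where q: "q 0 = y" "q 1 = x" "\<forall>i\<le>Suc N. q i \<in> V"
      "\<forall>i<N. u (q i) - u (q (Suc i)) - (M + e) \<le> u (q (Suc i)) - u (q (Suc (Suc i)))"
    using greedy_descent_path[OF assms(1-8), of e N] by auto
  define D where "D i = u (q i) - u (q (Suc i))" for i
  have "real N * (u y - u x) - (M + e) * (real N * (real N + 1) / 2) \<le> (\<Sum>i<N. D (Suc i))"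
    using sum_ge_of_decrement_bound[of N D "M + e"] q(1,2,4) unfolding D_def by simp
  also have "\<dots> = u x - u (q (Suc N))"
    unfolding D_def using sum_lessThan_telescope'[of "\<lambda>i. u (q (Suc i))" N] q(2) by simp
  also have "\<dots> \<le> u x - m" using assms(10) q(3) by auto
  finally have "real N * (u y - u x) - (M + e) * (real N * (real N + 1) / 2) \<le> u x - m" .
  moreover have "(M + e) * (real N * (real N + 1) / 2) = real N * ((real N + 1) * M / 2 + e0)"
    unfolding e_def by (simp add: field_simps)
  moreover have "real N * ((u x - m) / real N) = u x - m" using assms(9) by simp
  ultimately have "real N * (u y - u x) \<le> real N * ((u x - m) / real N + (real N + 1) * M / 2 + e0)"
    unfolding distrib_left by linarith
  then show "u y - u x \<le> (u x - m) / real N + (real N + 1) * M / 2 + e0"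
    using assms(9) by simp
qed

lemma ereal_le_div_INF:
  fixes u :: "'a \<Rightarrow> real"
  assumes "v \<in> V" "0 < r" "\<And>m. \<forall>v\<in>V. m \<le> u v \<Longrightarrow> a \<le> (c - m) / r + b"
  shows "ereal a \<le> (ereal c - (INF v\<in>V. ereal (u v))) / ereal r + ereal b"
proof (cases "(INF v\<in>V. ereal (u v)) = -\<infinity>")
  case True
  then show ?thesis using assms(2) by simp
next
  case False
  moreover have "(INF v\<in>V. ereal (u v)) \<le> ereal (u v)" using assms(1) by (rule INF_lower)
  ultimately obtain m where m: "(INF v\<in>V. ereal (u v)) = ereal m" by (cases "INF v\<in>V. ereal (u v)") auto
  then have "\<forall>v\<in>V. m \<le> u v" by (metis INF_lower ereal_less_eq(3))
  then have "a \<le> (c - m) / r + b" by (rule assms(3))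
  then show ?thesis using m assms(2) by simp
qed

theorem lemma3p1:
  fixes V :: "'a set" and E :: "'a set set" and X Y :: "'a set"
    and f g u :: "'a \<Rightarrow> real" and x y :: 'a and N :: nat
  assumes "ugraph V E"
    and "X \<subseteq> V" and "Y = V - X"
    and "bounded (f ` X)" and "bounded (g ` Y)"
    and "\<forall>z\<in>X. inf_lap_eq V E u z (f z)"
    and "\<forall>z\<in>Y. u z = g z"
    and "x \<in> X" and "y \<in> V" and "adj E x y"
    and "0 < N" and "enat N \<le> gdist E Y x"
  shows "ereal (u y - u x) \<le>
           (ereal (u x) - (INF v\<in>V. ereal (u v))) / ereal (real N)
           + ereal ((real N + 1) * (SUP z\<in>X. f z) / 2)"
proof (rule ereal_le_div_INF)
  have "bdd_above (f ` X)" using assms(4) by (rule bounded_imp_bdd_above)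
  then have "\<forall>z\<in>X. f z \<le> (SUP z\<in>X. f z)" by (auto intro: cSUP_upper)
  then show "u y - u x \<le> (u x - m) / real N + (real N + 1) * (SUP z\<in>X. f z) / 2"
    if "\<forall>v\<in>V. m \<le> u v" for m
    using edge_drop_le[OF assms(2,3,6) _ assms(8,9,10,12,11) that] by blast
qed (use assms(9,11) in auto)

end
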